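(* Let $\mathcal{X},\mathcal{Y},\mathcal{W}$ be finite nonempty sets, $\pi$ a probability distribution on $\mathcal{X}$, $C$ a channel from $\mathcal{X}$ to $\mathcal{Y}$, and $g:\mathcal{W}\times\mathcal{X}\to[0,\infty)$ such that $\pi_x g(w,x)>0$ for at least one pair $(w,x)$. Define $U(w,y)=\sum_{x}\pi_x C_{xy}g(w,x)$, $\alpha=\sum_{w,y}U(w,y)$ (which is $>0$), $P_{WY}(w,y)=U(w,y)/\alpha$, $\xi_w=\sum_y P_{WY}(w,y)$, and the channel $E$ from $\mathcal{W}$ to $\mathcal{Y}$ by $E_{wy}=P_{WY}(w,y)/\xi_w$ when $\xi_w>0$ (and an arbitrary probability distribution on $\mathcal{Y}$ as the row $E_{w\cdot}$ when $\xi_w=0$). Then $$V_g(\pi,C)=\alpha\cdot V_{g_{\mathrm{id}}}(\xi,E),$$ where $g_{\mathrm{id}}:\mathcal{W}\times\mathcal{W}\to\{0,1\}$ is the identity gain function.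
   Context: A channel from a finite set $\mathcal{A}$ to $\mathcal{Y}$ is a stochastic matrix $C=(C_{ay})$ with $C_{ay}\ge0$ and $\sum_y C_{ay}=1$ (the probability of observing $y$ on input $a$). For a prior $\pi$ on $\mathcal{A}$, a set of guesses $\mathcal{W}$ and a gain function $g:\mathcal{W}\times\mathcal{A}\to\mathbb{R}$, the posterior $g$-vulnerability is $V_g(\pi,C)=\sum_{y\in\mathcal{Y}}\max_{w\in\mathcal{W}}\sum_{a\in\mathcal{A}}\pi_a C_{ay}g(w,a)$. The identity gain function on a set $\mathcal{A}$ has guesses $\mathcal{A}$ and $g_{\mathrm{id}}(w,a)=1$ if $w=a$ and $0$ otherwise (so $V_{g_{\mathrm{id}}}$ is the Bayes vulnerability). *)

theory Defs
  imports Main "HOL.Real"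
begin

definition channel :: "('a \<Rightarrow> 'b::finite \<Rightarrow> real) \<Rightarrow> bool" where
  "channel C \<longleftrightarrow> (\<forall>a b. 0 \<le> C a b) \<and> (\<forall>a. (\<Sum>b\<in>UNIV. C a b) = 1)"

definition prob_dist :: "('a::finite \<Rightarrow> real) \<Rightarrow> bool" where
  "prob_dist p \<longleftrightarrow> (\<forall>a. 0 \<le> p a) \<and> (\<Sum>a\<in>UNIV. p a) = 1"

definition post_vuln ::
  "('a::finite \<Rightarrow> real) \<Rightarrow> ('a \<Rightarrow> 'y::finite \<Rightarrow> real) \<Rightarrow> ('w::finite \<Rightarrow> 'a \<Rightarrow> real) \<Rightarrow> real" where
  "post_vuln \<pi> C g = (\<Sum>y\<in>UNIV. Max (range (\<lambda>w. \<Sum>a\<in>UNIV. \<pi> a * C a y * g w a)))"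

definition g_id :: "'a \<Rightarrow> 'a \<Rightarrow> real" where
  "g_id w a = (if w = a then 1 else 0)"

end

theory Submission
  imports Defs
begin

text \<open>Normalising \<open>U\<close> by \<open>\<alpha>\<close> gives a joint distribution of guess and observation, which
  factors as the marginal \<open>\<xi>\<close> times the channel \<open>E\<close>. Bayes vulnerability of \<open>(\<xi>, E)\<close> is the
  sum over observations of the column maxima of this joint matrix, i.e. of the column maxima
  of \<open>U / \<alpha>\<close>; since division by \<open>\<alpha> > 0\<close> commutes with maxima, this is \<open>V_g(\<pi>, C) / \<alpha>\<close>.\<close>

lemma Max_range_divide:
  fixes f :: "'w::finite \<Rightarrow> real"
  assumes "c > 0"
  shows "Max (range (\<lambda>w. f w / c)) = Max (range f) / c"
proof -
  have "Max ((\<lambda>x. x / c) ` range f) = Max (range f) / c"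
    by (rule mono_Max_commute[symmetric]) (auto simp: monoI divide_right_mono assms less_imp_le)
  then show ?thesis
    by (simp add: image_image)
qed

lemma sum_pos_double:
  fixes f :: "'a::finite \<Rightarrow> 'b::finite \<Rightarrow> real"
  assumes nonneg: "\<And>a b. 0 \<le> f a b" and pos: "0 < f a b"
  shows "0 < (\<Sum>a\<in>UNIV. \<Sum>b\<in>UNIV. f a b)"
proof -
  have "0 < (\<Sum>b\<in>UNIV. f a b)"
    using nonneg pos by (intro sum_pos2[where i = b]) auto
  also have "\<dots> \<le> (\<Sum>a\<in>UNIV. \<Sum>b\<in>UNIV. f a b)"
    using nonneg by (intro member_le_sum) (auto intro: sum_nonneg)
  finally show ?thesis .
qed

lemma channel_sum_outputs:
  fixes f :: "'x::finite \<Rightarrow> real"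
  assumes "channel C"
  shows "(\<Sum>y\<in>UNIV. \<Sum>x\<in>UNIV. f x * C x y) = (\<Sum>x\<in>UNIV. f x)"
  using assms by (subst sum.swap) (simp add: channel_def sum_distrib_left[symmetric])

text \<open>Rows of \<open>E\<close> where the marginal vanishes are unconstrained, but there the whole row
  of \<open>J\<close> vanishes too.\<close>

lemma marginal_mult_conditional:
  fixes J :: "'w \<Rightarrow> 'y::finite \<Rightarrow> real"
  assumes nonneg: "\<And>w y. 0 \<le> J w y"
    and cond: "\<forall>w y. (\<Sum>y'\<in>UNIV. J w y') > 0 \<longrightarrow> E w y = J w y / (\<Sum>y'\<in>UNIV. J w y')"
  shows "(\<Sum>y'\<in>UNIV. J w y') * E w y = J w y"
proof (cases "(\<Sum>y'\<in>UNIV. J w y') > 0")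
  case True
  then show ?thesis
    using cond by simp
next
  case False
  then have "(\<Sum>y'\<in>UNIV. J w y') = 0"
    using nonneg by (meson linorder_not_le order.antisym sum_nonneg)
  then show ?thesis
    using nonneg by (simp add: sum_nonneg_eq_0_iff)
qed

lemma post_vuln_g_id:
  fixes p :: "'w::finite \<Rightarrow> real" and E :: "'w \<Rightarrow> 'y::finite \<Rightarrow> real"
  shows "post_vuln p E g_id = (\<Sum>y\<in>UNIV. Max (range (\<lambda>w. p w * E w y)))"
proof -
  have "(\<Sum>a\<in>UNIV. p a * E a y * g_id w a) = p w * E w y" for w y
    by (simp add: g_id_def if_distrib cong: if_cong)
  then show ?thesis
    by (simp add: post_vuln_def)
qed

theorem theorem2:
  fixes \<pi> :: "'x::finite \<Rightarrow> real"
    and C :: "'x \<Rightarrow> 'y::finite \<Rightarrow> real"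
    and g :: "'w::finite \<Rightarrow> 'x \<Rightarrow> real"
    and E :: "'w \<Rightarrow> 'y \<Rightarrow> real"
  assumes pi: "prob_dist \<pi>"
    and C: "channel C"
    and g_nonneg: "\<forall>w x. 0 \<le> g w x"
    and g_pos: "\<exists>w x. \<pi> x * g w x > 0"
  defines "U \<equiv> (\<lambda>w y. \<Sum>x\<in>UNIV. \<pi> x * C x y * g w x)"
  defines "\<alpha> \<equiv> (\<Sum>w\<in>UNIV. \<Sum>y\<in>UNIV. U w y)"
  defines "P \<equiv> (\<lambda>w y. U w y / \<alpha>)"
  defines "\<xi> \<equiv> (\<lambda>w. \<Sum>y\<in>UNIV. P w y)"
  assumes E: "channel E"
    and E_def: "\<forall>w y. \<xi> w > 0 \<longrightarrow> E w y = P w y / \<xi> w"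
  shows "post_vuln \<pi> C g = \<alpha> * post_vuln \<xi> E (g_id :: 'w \<Rightarrow> 'w \<Rightarrow> real)"
proof -
  have weight_nonneg: "0 \<le> \<pi> x * g w x" for w x
    using pi g_nonneg by (simp add: prob_dist_def)
  have "(\<Sum>y\<in>UNIV. U w y) = (\<Sum>x\<in>UNIV. \<pi> x * g w x)" for w
    using channel_sum_outputs[OF C, of "\<lambda>x. \<pi> x * g w x"]
    by (simp add: U_def mult.commute mult.left_commute)
  then have \<alpha>_pos: "\<alpha> > 0"
    using g_pos weight_nonneg by (auto simp: \<alpha>_def intro: sum_pos_double)
  have "0 \<le> P w y" for w y
    using pi C g_nonneg \<alpha>_pos
    by (auto simp: P_def U_def channel_def prob_dist_def intro!: sum_nonneg divide_nonneg_pos)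
  then have joint: "\<xi> w * E w y = P w y" for w y
    using marginal_mult_conditional[of P E] E_def by (simp add: \<xi>_def)
  have "post_vuln \<xi> E g_id = (\<Sum>y\<in>UNIV. Max (range (\<lambda>w. U w y)) / \<alpha>)"
    by (simp add: post_vuln_g_id joint P_def Max_range_divide[OF \<alpha>_pos])
  also have "\<dots> = post_vuln \<pi> C g / \<alpha>"
    by (simp add: post_vuln_def U_def sum_divide_distrib)
  finally show ?thesis
    using \<alpha>_pos by simp
qed

end
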